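(* Assume the loss $f(\cdot,z)$ is $\beta$-smooth for all $z\in\mathcal{Z}$. Consider full-batch GD with $T$ iterations and learning rates satisfying $\eta_t\le C/t\le 1/\beta$ for all $t\le T+1$. Let $\epsilon=\beta C<1$ and $\bar C(\epsilon,T)=\min\{\epsilon+1/2,\ \epsilon\log(eT)\}$. Then $$|\epsilon_{\mathrm{gen}}|\le\frac{4\sqrt2}{n}\sqrt{(\epsilon_{\mathrm{opt}}+\epsilon_{\mathbf{c}})\,\epsilon_{\mathrm{path}}}\,(eT)^{\epsilon}\,\bar C^{1/2}(\epsilon,T)+8\frac{\epsilon_{\mathrm{path}}}{n^2}(eT)^{2\epsilon}\bar C(\epsilon,T)\le\frac{4\sqrt3\,(eT)^{\epsilon}}{n}\sqrt{(\epsilon_{\mathrm{opt}}+\epsilon_{\mathbf{c}})\,\epsilon_{\mathrm{path}}}+12\frac{(eT)^{2\epsilon}}{n^2}\epsilon_{\mathrm{path}}.$$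
   Context: Let $\mathcal{D}$ be a distribution on $\mathcal{Z}$ and $z_1,\dots,z_n,z_i'$ i.i.d. from $\mathcal{D}$; $S=(z_1,\dots,z_n)$. The loss $f:\mathbb{R}^d\times\mathcal{Z}\to[0,\infty)$ is non-negative and $\beta$-smooth ($\|\nabla f(w,z)-\nabla f(u,z)\|_2\le\beta\|w-u\|_2$), possibly nonconvex. $R(w)=\mathbb{E}_{Z\sim\mathcal{D}}[f(w,Z)]$, $R_S(w)=\frac1n\sum_j f(w,z_j)$, $W^*_S$ a minimizer of $R_S$ (assumed to exist). Full-batch GD: from a fixed $W_1$, $W_{t+1}=W_t-\frac{\eta_t}{n}\sum_{j=1}^n\nabla f(W_t,z_j)$, $t=1,\dots,T$, output $A(S)=W_{T+1}$. Definitions: $\epsilon_{\mathrm{gen}}=\mathbb{E}[R(A(S))-R_S(A(S))]$; $\epsilon_{\mathrm{opt}}=\mathbb{E}[R_S(A(S))-R_S(W^*_S)]$; $\epsilon_{\mathbf{c}}=\mathbb{E}[R_S(W^*_S)]$; $\epsilon_{\mathrm{path}}=\sum_{t=1}^T\eta_t\mathbb{E}[\|\nabla f(W_t,z_i)\|_2^2]$ for a fixed index $i$. *)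

theory Defs
  imports "HOL-Probability.Probability"
begin

definition sample_space :: "'z measure \<Rightarrow> nat \<Rightarrow> (nat \<Rightarrow> 'z) measure" where
  "sample_space D n = PiM {..<n} (\<lambda>_. D)"

definition emp_risk :: "('a \<Rightarrow> 'z \<Rightarrow> real) \<Rightarrow> nat \<Rightarrow> (nat \<Rightarrow> 'z) \<Rightarrow> 'a \<Rightarrow> real" where
  "emp_risk f n S w = (\<Sum>j<n. f w (S j)) / real n"

definition pop_risk :: "'z measure \<Rightarrow> ('a \<Rightarrow> 'z \<Rightarrow> real) \<Rightarrow> 'a \<Rightarrow> real" where
  "pop_risk D f w = (\<integral>z. f w z \<partial>D)"

text \<open>Full-batch GD iterates, with g the gradient of f in w.
  gd_iter eta g W1 n S k is the paper's W_{k+1}; so gd_iter ... 0 = W_1 and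
  W_{t+1} = W_t - (eta_t / n) * sum_j g(W_t, z_j).\<close>
primrec gd_iter :: "(nat \<Rightarrow> real) \<Rightarrow> ('a::real_vector \<Rightarrow> 'z \<Rightarrow> 'a) \<Rightarrow> 'a \<Rightarrow> nat
    \<Rightarrow> (nat \<Rightarrow> 'z) \<Rightarrow> nat \<Rightarrow> 'a" where
  "gd_iter eta g W1 n S 0 = W1"
| "gd_iter eta g W1 n S (Suc k) =
     gd_iter eta g W1 n S k
       - (eta (Suc k) / real n) *\<^sub>R (\<Sum>j<n. g (gd_iter eta g W1 n S k) (S j))"

definition gd_output :: "(nat \<Rightarrow> real) \<Rightarrow> ('a::real_vector \<Rightarrow> 'z \<Rightarrow> 'a) \<Rightarrow> 'a \<Rightarrow> nat
    \<Rightarrow> nat \<Rightarrow> (nat \<Rightarrow> 'z) \<Rightarrow> 'a" where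
  "gd_output eta g W1 n T S = gd_iter eta g W1 n S T"

definition eps_gen where
  "eps_gen D f g W1 eta n T =
     (\<integral>S. pop_risk D f (gd_output eta g W1 n T S) - emp_risk f n S (gd_output eta g W1 n T S)
        \<partial>sample_space D n)"

definition eps_opt where
  "eps_opt D f g W1 eta n T wstar =
     (\<integral>S. emp_risk f n S (gd_output eta g W1 n T S) - emp_risk f n S (wstar S)
        \<partial>sample_space D n)"

definition eps_c where
  "eps_c D f n wstar = (\<integral>S. emp_risk f n S (wstar S) \<partial>sample_space D n)"

definition eps_path where
  "eps_path D (g :: 'a::real_normed_vector \<Rightarrow> 'z \<Rightarrow> 'a) W1 eta n T i =
     (\<Sum>t\<in>{1..T}. eta t *
        (\<integral>S. (norm (g (gd_iter eta g W1 n S (t - 1)) (S i)))\<^sup>2 \<partial>sample_space D n))"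

definition cbar :: "real \<Rightarrow> nat \<Rightarrow> real" where
  "cbar eps T = min (eps + 1/2) (eps * ln (exp 1 * real T))"

end

(*
  Let S' be the sample S with z_i replaced by an independent copy z_i'. Since (S', z_i) has
  the law of (S, z_i') and gradient descent is invariant under permutations of the sample,
  eps_gen is the expected change E[f(A(S'), z_i) - f(A(S), z_i)] of the loss at z_i.
  By smoothness this change is at most |grad f(A(S), z_i)| d + beta d^2 with
  d = |A(S') - A(S)|, and nonnegativity gives the self-bound |grad f|^2 <= 4 beta f.
  Unrolling the recursion of gradient descent bounds d by the gradients at z_i along both
  trajectories, weighted by the expansion factors prod_{m > t} (1 + beta eta_m); this gives
  E d^2 <= 4 W eps_path / n^2 with W = sum_t eta_t prod_{m > t} (1 + beta eta_m)^2.
  Cauchy-Schwarz then yields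
    |eps_gen| <= 4/n sqrt (beta W (eps_opt + eps_c) eps_path) + 4 beta W eps_path / n^2,
  and for eta_t <= C/t the weight satisfies beta W <= T^(2 eps) cbar(eps, T), because
  prod_{t < m <= T} (1 + eps/m) <= (T/t)^eps.
*)
theory Submission
  imports Defs
begin

section \<open>Smooth functions\<close>

lemma first_order_remainder_le:
  fixes F :: "'a::real_inner \<Rightarrow> real" and G :: "'a \<Rightarrow> 'a"
  assumes grad: "\<And>w. (F has_derivative (\<lambda>h. G w \<bullet> h)) (at w)"
    and lip: "\<And>w u. norm (G w - G u) \<le> beta * norm (w - u)" and beta: "beta \<ge> 0"
  shows "\<bar>F (w + d) - F w - G w \<bullet> d\<bar> \<le> beta * (norm d)\<^sup>2"
proof -
  define \<psi> where "\<psi> s = F (w + s *\<^sub>R d) - s * (G w \<bullet> d)" for s :: real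
  have deriv: "(\<psi> has_derivative (\<lambda>h. h * (G (w + s *\<^sub>R d) \<bullet> d - G w \<bullet> d))) (at s)" for s
  proof -
    have "((\<lambda>s. w + s *\<^sub>R d) has_derivative (\<lambda>h. h *\<^sub>R d)) (at s)"
      by (auto intro!: derivative_eq_intros)
    from has_derivative_compose[OF this grad]
    show ?thesis unfolding \<psi>_def
      by (auto intro!: derivative_eq_intros simp: o_def algebra_simps)
  qed
  then have "continuous_on {0..1} \<psi>"
    by (meson has_derivative_continuous continuous_at_imp_continuous_on)
  then obtain s where s: "s \<in> {0<..<1}"
    and mvt: "\<bar>\<psi> 1 - \<psi> 0\<bar> \<le> \<bar>G (w + s *\<^sub>R d) \<bullet> d - G w \<bullet> d\<bar>"
    using mvt_general[of 0 1 \<psi>, OF _ _ deriv] by auto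
  have "\<bar>G (w + s *\<^sub>R d) \<bullet> d - G w \<bullet> d\<bar> \<le> norm (G (w + s *\<^sub>R d) - G w) * norm d"
    using Cauchy_Schwarz_ineq2[of "G (w + s *\<^sub>R d) - G w" d] by (simp add: inner_diff_left)
  also have "\<dots> \<le> beta * norm (s *\<^sub>R d) * norm d"
    using lip[of "w + s *\<^sub>R d" w] by (intro mult_right_mono) auto
  also have "\<dots> \<le> beta * norm d * norm d"
    using s beta by (intro mult_right_mono mult_left_mono) (auto simp: mult_left_le_one_le)
  finally show ?thesis using mvt by (simp add: \<psi>_def power2_eq_square)
qed

lemma abs_diff_le_norm_grad:
  fixes F :: "'a::real_inner \<Rightarrow> real" and G :: "'a \<Rightarrow> 'a"
  assumes grad: "\<And>w. (F has_derivative (\<lambda>h. G w \<bullet> h)) (at w)"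
    and lip: "\<And>w u. norm (G w - G u) \<le> beta * norm (w - u)" and beta: "beta \<ge> 0"
  shows "\<bar>F w' - F w\<bar> \<le> norm (G w) * norm (w' - w) + beta * (norm (w' - w))\<^sup>2"
  using first_order_remainder_le[OF grad lip beta, of w "w' - w"]
    Cauchy_Schwarz_ineq2[of "G w" "w' - w"] by simp

(* A gradient step of length 1/(2 beta) would otherwise push F below zero. *)
lemma norm_grad_sq_le:
  fixes F :: "'a::real_inner \<Rightarrow> real" and G :: "'a \<Rightarrow> 'a"
  assumes grad: "\<And>w. (F has_derivative (\<lambda>h. G w \<bullet> h)) (at w)"
    and lip: "\<And>w u. norm (G w - G u) \<le> beta * norm (w - u)" and beta: "beta > 0"
    and nonneg: "\<And>w. F w \<ge> 0"
  shows "(norm (G w))\<^sup>2 \<le> 4 * beta * F w"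
proof -
  define d where "d = - (1 / (2 * beta)) *\<^sub>R G w"
  have "F (w + d) - F w - G w \<bullet> d \<le> beta * (norm d)\<^sup>2"
    using first_order_remainder_le[OF grad lip, of w d] beta by auto
  moreover have "G w \<bullet> d = - (norm (G w))\<^sup>2 / (2 * beta)"
    unfolding d_def by (simp add: power2_norm_eq_inner)
  moreover have "(norm d)\<^sup>2 = (norm (G w))\<^sup>2 / (4 * beta\<^sup>2)"
    unfolding d_def using beta by (simp add: power_divide power_mult_distrib)
  ultimately have "(norm (G w))\<^sup>2 / (4 * beta) \<le> F w - F (w + d)"
    using beta by (simp add: power2_eq_square field_simps)
  then have "(norm (G w))\<^sup>2 / (4 * beta) \<le> F w"
    using nonneg[of "w + d"] by linarith
  then show ?thesis
    using beta by (simp add: field_simps)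
qed

lemma convex_on_powr_neg: "a \<ge> 0 \<Longrightarrow> convex_on {0<..} (\<lambda>x::real. x powr (- a))"
  by (intro f''_ge0_imp_convex derivative_eq_intros | simp add: mult_le_0_iff)+

lemma powr_neg_diff_ge:
  fixes a :: real assumes "a \<ge> 0" "x > 1"
  shows "a * x powr (- 1 - a) \<le> (x - 1) powr (- a) - x powr (- a)"
proof -
  have "(x - 1) powr (- a) - x powr (- a) \<ge> (- a * x powr (- a - 1)) * ((x - 1) - x)"
    using assms
    by (intro convex_on_imp_above_tangent[of "{0<..}"] convex_on_powr_neg)
       (auto simp: interior_open intro!: derivative_eq_intros)
  then show ?thesis by (simp add: minus_diff_commute[of a 1])
qed

lemma sum_powr_le:
  fixes a :: real assumes a: "a > 0"
  shows "(\<Sum>t=1..T. real t powr (- 1 - a)) \<le> 1 + 1 / a"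
proof -
  have "(\<Sum>t=1..T. real t powr (- 1 - a)) \<le> 1 + (1 - real T powr (- a)) / a" if "T \<ge> 1" for T
    using that
  proof (induction T rule: dec_induct)
    case (step m)
    have "a * real (Suc m) powr (- 1 - a) \<le> real m powr (- a) - real (Suc m) powr (- a)"
      using powr_neg_diff_ge[of a "real (Suc m)"] a step by simp
    then show ?case using step a by (simp add: field_simps)
  qed simp
  moreover have "(1 - real T powr (- a)) / a \<le> 1 / a" using a by (simp add: divide_right_mono)
  ultimately show ?thesis using a by (cases "T \<ge> 1") force+
qed

lemma harm_le_one_plus_ln: "n > 0 \<Longrightarrow> harm n \<le> 1 + ln (real n)"
  using euler_mascheroni_sequence_decreasing[of 1 n] by (simp add: harm_expand)

lemma sum_inverse_eq_harm_diff:
  "m \<le> n \<Longrightarrow> (\<Sum>k\<in>{m<..n}. 1 / real k) = harm n - harm m"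
proof -
  assume "m \<le> n"
  then have "{1..n} = {1..m} \<union> {m<..n}" by auto
  then have "harm n = harm m + (\<Sum>k\<in>{m<..n}. inverse (real k))"
    unfolding harm_def by (simp add: sum.union_disjoint ivl_disj_int)
  then show ?thesis by (simp add: inverse_eq_divide)
qed

lemma prod_one_plus_div_le_powr:
  fixes e :: real assumes e: "e \<ge> 0" and t: "0 < t" "t \<le> T"
  shows "(\<Prod>k\<in>{t<..T}. 1 + e / real k) \<le> (real T / real t) powr e"
proof -
  have "(\<Prod>k\<in>{t<..T}. 1 + e / real k) \<le> (\<Prod>k\<in>{t<..T}. exp (e / real k))"
    using e by (intro prod_mono) auto
  also have "\<dots> = exp (e * (harm T - harm t))"
    using t by (simp add: exp_sum[symmetric] sum_inverse_eq_harm_diff[symmetric] sum_distrib_left)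
  also have "\<dots> \<le> exp (e * (ln (real T) - ln (real t)))"
    using euler_mascheroni_sequence_decreasing[of t T] t e by (intro exp_mono mult_left_mono) auto
  also have "\<dots> = (real T / real t) powr e"
    using t by (simp add: powr_def ln_div)
  finally show ?thesis .
qed

lemma linear_recurrence_le:
  fixes d c e :: "nat \<Rightarrow> real"
  assumes d0: "d 0 \<le> 0" and c: "\<And>k. 1 \<le> k \<Longrightarrow> k \<le> K \<Longrightarrow> c k \<ge> 0"
    and step: "\<And>k. k < K \<Longrightarrow> d (Suc k) \<le> (1 + c (Suc k)) * d k + e (Suc k)"
  shows "k \<le> K \<Longrightarrow> d k \<le> (\<Sum>t=1..k. e t * (\<Prod>m\<in>{t<..k}. 1 + c m))"
proof (induction k)
  case (Suc k)
  have prod_Suc: "(\<Prod>m\<in>{t<..Suc k}. 1 + c m) = (1 + c (Suc k)) * (\<Prod>m\<in>{t<..k}. 1 + c m)"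
    if "t \<le> k" for t
  proof -
    have "{t<..Suc k} = insert (Suc k) {t<..k}" using that by auto
    then show ?thesis by simp
  qed
  have "d (Suc k) \<le> (1 + c (Suc k)) * d k + e (Suc k)" using step Suc by simp
  also have "\<dots> \<le> (1 + c (Suc k)) * (\<Sum>t=1..k. e t * (\<Prod>m\<in>{t<..k}. 1 + c m)) + e (Suc k)"
    using Suc c[of "Suc k"] by (intro add_right_mono mult_left_mono) auto
  also have "\<dots> = (\<Sum>t=1..Suc k. e t * (\<Prod>m\<in>{t<..Suc k}. 1 + c m))"
    by (simp add: prod_Suc sum_distrib_left algebra_simps)
  finally show ?case .
qed (use d0 in simp)

lemma sq_sum_le_weighted:
  fixes w a b p :: "'i \<Rightarrow> real"
  assumes w: "\<And>t. t \<in> I \<Longrightarrow> w t \<ge> 0"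
  shows "(\<Sum>t\<in>I. w t * (a t + b t) * p t)\<^sup>2
     \<le> 2 * (\<Sum>t\<in>I. w t * (p t)\<^sup>2) * (\<Sum>t\<in>I. w t * ((a t)\<^sup>2 + (b t)\<^sup>2))"
proof -
  have "(sqrt (w t) * p t) * (sqrt (w t) * (a t + b t)) = w t * (a t + b t) * p t" if "t \<in> I" for t
  proof -
    have "(sqrt (w t) * p t) * (sqrt (w t) * (a t + b t)) = (sqrt (w t) * sqrt (w t)) * (a t + b t) * p t"
      by (simp only: mult_ac)
    also have "\<dots> = w t * (a t + b t) * p t"
      using w[OF that] by simp
    finally show ?thesis .
  qed
  then have sum_eq: "(\<Sum>t\<in>I. (sqrt (w t) * p t) * (sqrt (w t) * (a t + b t))) = (\<Sum>t\<in>I. w t * (a t + b t) * p t)"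
    by (rule sum.cong[OF refl])
  have "(\<Sum>t\<in>I. w t * (a t + b t) * p t)\<^sup>2
      = (\<Sum>t\<in>I. (sqrt (w t) * p t) * (sqrt (w t) * (a t + b t)))\<^sup>2"
    by (simp only: sum_eq)
  also have "\<dots> \<le> (\<Sum>t\<in>I. (sqrt (w t) * p t)\<^sup>2) * (\<Sum>t\<in>I. (sqrt (w t) * (a t + b t))\<^sup>2)"
    by (rule Cauchy_Schwarz_ineq_sum)
  also have "\<dots> \<le> (\<Sum>t\<in>I. w t * (p t)\<^sup>2) * (\<Sum>t\<in>I. 2 * (w t * ((a t)\<^sup>2 + (b t)\<^sup>2)))"
  proof (intro mult_mono sum_mono sum_nonneg)
    fix t assume t: "t \<in> I"
    have "(a t + b t)\<^sup>2 \<le> 2 * ((a t)\<^sup>2 + (b t)\<^sup>2)"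
      using zero_le_power2[of "a t - b t"] by (simp add: power2_eq_square algebra_simps)
    then have "w t * (a t + b t)\<^sup>2 \<le> w t * (2 * ((a t)\<^sup>2 + (b t)\<^sup>2))"
      using w[OF t] by (rule mult_left_mono)
    then show "(sqrt (w t) * (a t + b t))\<^sup>2 \<le> 2 * (w t * ((a t)\<^sup>2 + (b t)\<^sup>2))"
      using w[OF t] by (simp add: power_mult_distrib mult_ac)
  qed (use w in \<open>auto simp: power_mult_distrib\<close>)
  also have "\<dots> = 2 * (\<Sum>t\<in>I. w t * (p t)\<^sup>2) * (\<Sum>t\<in>I. w t * ((a t)\<^sup>2 + (b t)\<^sup>2))"
    by (simp only: sum_distrib_left[symmetric])
  finally show ?thesis .
qed

section \<open>Stability of gradient descent\<close>

definition gd_growth :: "real \<Rightarrow> (nat \<Rightarrow> real) \<Rightarrow> nat \<Rightarrow> nat \<Rightarrow> real" where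
  "gd_growth beta eta t K = (\<Prod>m\<in>{t<..K}. 1 + beta * eta m)"

definition stability_weight :: "real \<Rightarrow> (nat \<Rightarrow> real) \<Rightarrow> nat \<Rightarrow> real" where
  "stability_weight beta eta K = (\<Sum>t=1..K. eta t * (gd_growth beta eta t K)\<^sup>2)"

lemma gd_iter_permute:
  assumes p: "bij_betw p {..<n} {..<n}" and S': "\<And>j. j < n \<Longrightarrow> S' j = S (p j)"
  shows "gd_iter eta g W1 n S' k = gd_iter eta g W1 n S k"
proof (induction k)
  case (Suc k)
  have "(\<Sum>j<n. g w (S' j)) = (\<Sum>j<n. g w (S j))" for w
    using S' sum.reindex_bij_betw[OF p, of "\<lambda>j. g w (S j)"] by simp
  then show ?case using Suc by simp
qed simp

lemma gd_iter_replace_one_step: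
  fixes g :: "'a::real_normed_vector \<Rightarrow> 'z \<Rightarrow> 'a"
  assumes smooth: "\<And>w u z. norm (g w z - g u z) \<le> beta * norm (w - u)" and beta: "beta \<ge> 0"
    and i: "i < n" and S': "\<And>j. j < n \<Longrightarrow> j \<noteq> i \<Longrightarrow> S' j = S j" and eta: "eta (Suc k) \<ge> 0"
  shows "norm (gd_iter eta g W1 n S (Suc k) - gd_iter eta g W1 n S' (Suc k))
     \<le> (1 + beta * eta (Suc k)) * norm (gd_iter eta g W1 n S k - gd_iter eta g W1 n S' k)
        + eta (Suc k) / real n * (norm (g (gd_iter eta g W1 n S k) (S i))
                                 + norm (g (gd_iter eta g W1 n S' k) (S' i)))"
proof -
  define w where "w = gd_iter eta g W1 n S k"
  define w' where "w' = gd_iter eta g W1 n S' k"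
  define r where "r = eta (Suc k) / real n"
  have r: "r \<ge> 0" unfolding r_def using eta by simp
  have "norm (\<Sum>j<n. g w (S j) - g w' (S' j)) \<le> (\<Sum>j<n. norm (g w (S j) - g w' (S' j)))"
    by (rule norm_sum)
  also have "\<dots> = norm (g w (S i) - g w' (S' i)) + (\<Sum>j\<in>{..<n} - {i}. norm (g w (S j) - g w' (S' j)))"
    using i by (subst sum.remove[of _ i]) auto
  also have "\<dots> \<le> (norm (g w (S i)) + norm (g w' (S' i))) + (\<Sum>j\<in>{..<n} - {i}. beta * norm (w - w'))"
    using S' smooth by (intro add_mono norm_triangle_ineq4 sum_mono) auto
  also have "\<dots> \<le> (norm (g w (S i)) + norm (g w' (S' i))) + real n * (beta * norm (w - w'))"
    using i beta by (intro add_left_mono) (simp add: mult_right_mono)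
  finally have sum_le: "norm (\<Sum>j<n. g w (S j) - g w' (S' j))
      \<le> (norm (g w (S i)) + norm (g w' (S' i))) + real n * (beta * norm (w - w'))" .
  have "gd_iter eta g W1 n S (Suc k) - gd_iter eta g W1 n S' (Suc k)
      = (w - w') - r *\<^sub>R (\<Sum>j<n. g w (S j) - g w' (S' j))"
    unfolding w_def w'_def r_def by (simp add: sum_subtractf algebra_simps)
  then have "norm (gd_iter eta g W1 n S (Suc k) - gd_iter eta g W1 n S' (Suc k))
      \<le> norm (w - w') + r * norm (\<Sum>j<n. g w (S j) - g w' (S' j))"
    using norm_triangle_ineq4 r by (metis abs_of_nonneg norm_scaleR)
  also have "\<dots> \<le> norm (w - w') + r * ((norm (g w (S i)) + norm (g w' (S' i))) + real n * (beta * norm (w - w')))"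
    using sum_le r by (intro add_left_mono mult_left_mono) auto
  also have "\<dots> = (1 + beta * eta (Suc k)) * norm (w - w') + r * (norm (g w (S i)) + norm (g w' (S' i)))"
    using i by (simp add: r_def field_simps)
  finally show ?thesis unfolding w_def w'_def r_def .
qed

lemma norm_gd_iter_replace_one_le:
  fixes g :: "'a::real_normed_vector \<Rightarrow> 'z \<Rightarrow> 'a"
  assumes smooth: "\<And>w u z. norm (g w z - g u z) \<le> beta * norm (w - u)" and beta: "beta \<ge> 0"
    and i: "i < n" and S': "\<And>j. j < n \<Longrightarrow> j \<noteq> i \<Longrightarrow> S' j = S j"
    and eta: "\<And>t. 1 \<le> t \<Longrightarrow> t \<le> K \<Longrightarrow> eta t \<ge> 0"
  shows "norm (gd_iter eta g W1 n S K - gd_iter eta g W1 n S' K)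
     \<le> (\<Sum>t=1..K. eta t / real n * (norm (g (gd_iter eta g W1 n S (t - 1)) (S i))
                   + norm (g (gd_iter eta g W1 n S' (t - 1)) (S' i))) * gd_growth beta eta t K)"
proof -
  define d where "d k = norm (gd_iter eta g W1 n S k - gd_iter eta g W1 n S' k)" for k
  define e where "e t = eta t / real n * (norm (g (gd_iter eta g W1 n S (t - 1)) (S i))
                   + norm (g (gd_iter eta g W1 n S' (t - 1)) (S' i)))" for t
  have "d K \<le> (\<Sum>t=1..K. e t * (\<Prod>m\<in>{t<..K}. 1 + beta * eta m))"
  proof (rule linear_recurrence_le[where c = "\<lambda>k. beta * eta k"])
    fix k assume "k < K"
    then have "eta (Suc k) \<ge> 0" using eta by simp
    then show "d (Suc k) \<le> (1 + beta * eta (Suc k)) * d k + e (Suc k)"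
      unfolding d_def e_def using gd_iter_replace_one_step[OF smooth beta i S'] by simp
  qed (use beta eta in \<open>auto simp: d_def\<close>)
  then show ?thesis unfolding d_def e_def gd_growth_def by (simp add: mult_ac)
qed

lemma norm_gd_iter_replace_one_sq_le:
  fixes g :: "'a::real_normed_vector \<Rightarrow> 'z \<Rightarrow> 'a"
  assumes smooth: "\<And>w u z. norm (g w z - g u z) \<le> beta * norm (w - u)" and beta: "beta \<ge> 0"
    and i: "i < n" and S': "\<And>j. j < n \<Longrightarrow> j \<noteq> i \<Longrightarrow> S' j = S j"
    and eta: "\<And>t. 1 \<le> t \<Longrightarrow> t \<le> K \<Longrightarrow> eta t \<ge> 0"
  shows "(norm (gd_iter eta g W1 n S K - gd_iter eta g W1 n S' K))\<^sup>2
     \<le> 2 * stability_weight beta eta K / (real n)\<^sup>2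
        * (\<Sum>t=1..K. eta t * ((norm (g (gd_iter eta g W1 n S (t - 1)) (S i)))\<^sup>2
                             + (norm (g (gd_iter eta g W1 n S' (t - 1)) (S' i)))\<^sup>2))"
proof -
  let ?a = "\<lambda>t. norm (g (gd_iter eta g W1 n S (t - 1)) (S i))"
  let ?b = "\<lambda>t. norm (g (gd_iter eta g W1 n S' (t - 1)) (S' i))"
  have "(norm (gd_iter eta g W1 n S K - gd_iter eta g W1 n S' K))\<^sup>2
      \<le> (\<Sum>t=1..K. eta t / real n * (?a t + ?b t) * gd_growth beta eta t K)\<^sup>2"
    by (intro power_mono norm_gd_iter_replace_one_le[OF smooth beta i S' eta]) auto
  also have "\<dots> = (\<Sum>t=1..K. eta t * (?a t + ?b t) * gd_growth beta eta t K)\<^sup>2 / (real n)\<^sup>2"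
    by (simp add: sum_divide_distrib[symmetric] power_divide)
  also have "\<dots> \<le> 2 * stability_weight beta eta K * (\<Sum>t=1..K. eta t * ((?a t)\<^sup>2 + (?b t)\<^sup>2)) / (real n)\<^sup>2"
    unfolding stability_weight_def using eta
    by (intro divide_right_mono sq_sum_le_weighted) auto
  finally show ?thesis by simp
qed

section \<open>Learning rates of order 1/t\<close>

lemma cbar_nonneg: "0 \<le> e \<Longrightarrow> 1 \<le> T \<Longrightarrow> 0 \<le> cbar e T"
  by (auto simp: cbar_def ln_mult)

lemma cbar_le: "e < 1 \<Longrightarrow> cbar e T \<le> 3 / 2"
  using min.cobounded1[of "e + 1 / 2" "e * ln (exp 1 * real T)"] unfolding cbar_def by linarith

lemma sum_powr_le_cbar:
  fixes e :: real assumes e: "e > 0" and T: "T \<ge> 1"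
  shows "e * (\<Sum>t=1..T. real t powr (- 1 - 2 * e)) \<le> cbar e T"
proof -
  have "e * (\<Sum>t=1..T. real t powr (- 1 - 2 * e)) \<le> e * (1 + 1 / (2 * e))"
    using sum_powr_le[of "2 * e" T] e by (intro mult_left_mono) auto
  also have "\<dots> = e + 1 / 2"
    using e by (simp add: field_simps)
  finally have half: "e * (\<Sum>t=1..T. real t powr (- 1 - 2 * e)) \<le> e + 1 / 2" .
  have "(\<Sum>t=1..T. real t powr (- 1 - 2 * e)) \<le> (\<Sum>t=1..T. inverse (real t))"
  proof (rule sum_mono)
    fix t assume "t \<in> {1..T}"
    then have "real t powr (- 1 - 2 * e) \<le> real t powr (- 1)"
      using e by (intro powr_mono) auto
    then show "real t powr (- 1 - 2 * e) \<le> inverse (real t)"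
      by (simp add: powr_minus)
  qed
  also have "\<dots> \<le> ln (exp 1 * real T)"
    using harm_le_one_plus_ln[of T] T by (simp add: harm_def ln_mult)
  finally have "e * (\<Sum>t=1..T. real t powr (- 1 - 2 * e)) \<le> e * ln (exp 1 * real T)"
    using e by (intro mult_left_mono) auto
  then show ?thesis
    using half by (simp add: cbar_def)
qed

lemma stability_weight_le:
  fixes beta C :: real and eta :: "nat \<Rightarrow> real"
  assumes beta: "beta > 0" and C: "C > 0" and T: "T \<ge> 1"
    and eta: "\<And>t. 1 \<le> t \<Longrightarrow> t \<le> T \<Longrightarrow> 0 \<le> eta t \<and> eta t \<le> C / real t"
  shows "beta * stability_weight beta eta T \<le> real T powr (2 * (beta * C)) * cbar (beta * C) T"
proof -
  define e where "e = beta * C"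
  have e: "e > 0" unfolding e_def using beta C by simp
  have rate: "beta * eta t \<le> e / real t" if "1 \<le> t" "t \<le> T" for t
    using eta[OF that] beta mult_left_mono[of "eta t" "C / real t" beta] by (simp add: e_def)
  have summand: "beta * (eta t * (gd_growth beta eta t T)\<^sup>2) \<le> e * real T powr (2 * e) * real t powr (- 1 - 2 * e)"
    if t: "t \<in> {1..T}" for t
  proof -
    have "gd_growth beta eta t T \<le> (\<Prod>m\<in>{t<..T}. 1 + e / real m)"
      unfolding gd_growth_def using rate eta beta t by (intro prod_mono) auto
    also have "\<dots> \<le> (real T / real t) powr e"
      using t e by (intro prod_one_plus_div_le_powr) auto
    finally have "(gd_growth beta eta t T)\<^sup>2 \<le> ((real T / real t) powr e)\<^sup>2"
      using eta beta t by (intro power_mono) (auto simp: gd_growth_def intro!: prod_nonneg)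
    also have "\<dots> = (real T / real t) powr (2 * e)"
      by (simp add: power2_eq_square powr_add[symmetric])
    finally have "(beta * eta t) * (gd_growth beta eta t T)\<^sup>2 \<le> (e / real t) * (real T / real t) powr (2 * e)"
      using rate[of t] t eta[of t] beta e by (intro mult_mono) auto
    also have "\<dots> = e * real T powr (2 * e) * real t powr (- 1 - 2 * e)"
      using t by (simp add: powr_divide powr_diff powr_minus_divide field_simps)
    finally show ?thesis by (simp add: mult_ac)
  qed
  have "beta * stability_weight beta eta T \<le> (\<Sum>t=1..T. e * real T powr (2 * e) * real t powr (- 1 - 2 * e))"
    unfolding stability_weight_def sum_distrib_left using summand by (intro sum_mono) auto
  also have "\<dots> = real T powr (2 * e) * (e * (\<Sum>t=1..T. real t powr (- 1 - 2 * e)))"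
    by (simp add: sum_distrib_left mult_ac)
  also have "\<dots> \<le> real T powr (2 * e) * cbar e T"
    using sum_powr_le_cbar[OF e T] by (intro mult_left_mono) auto
  finally show ?thesis unfolding e_def .
qed

lemma integral_mult_le_sqrt:
  fixes u v :: "'a \<Rightarrow> real"
  assumes u: "u \<in> borel_measurable M" and v: "v \<in> borel_measurable M"
    and u2: "integrable M (\<lambda>x. (u x)\<^sup>2)" and v2: "integrable M (\<lambda>x. (v x)\<^sup>2)"
  shows "integrable M (\<lambda>x. u x * v x)"
    and "(\<integral>x. u x * v x \<partial>M) \<le> sqrt ((\<integral>x. (u x)\<^sup>2 \<partial>M) * (\<integral>x. (v x)\<^sup>2 \<partial>M))"
proof -
  have am_gm: "\<bar>u x * v x\<bar> \<le> ((u x)\<^sup>2 + (v x)\<^sup>2) / 2" for x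
    using zero_le_power2[of "\<bar>u x\<bar> - \<bar>v x\<bar>"] by (simp add: power2_eq_square abs_mult algebra_simps)
  show uv: "integrable M (\<lambda>x. u x * v x)"
    by (rule Bochner_Integration.integrable_bound[of _ "\<lambda>x. ((u x)\<^sup>2 + (v x)\<^sup>2) / 2"])
       (use u2 v2 u v am_gm in auto)
  have "ennreal ((\<integral>x. \<bar>u x\<bar> * \<bar>v x\<bar> \<partial>M)\<^sup>2) = (\<integral>\<^sup>+x. ennreal \<bar>u x\<bar> * ennreal \<bar>v x\<bar> \<partial>M)\<^sup>2"
    using integrable_abs[OF uv]
    by (simp add: nn_integral_eq_integral abs_mult ennreal_mult[symmetric] ennreal_power)
  also have "\<dots> \<le> (\<integral>\<^sup>+x. (ennreal \<bar>u x\<bar>)\<^sup>2 \<partial>M) * (\<integral>\<^sup>+x. (ennreal \<bar>v x\<bar>)\<^sup>2 \<partial>M)"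
    using u v by (intro Cauchy_Schwarz_nn_integral) auto
  also have "\<dots> = ennreal ((\<integral>x. (u x)\<^sup>2 \<partial>M) * (\<integral>x. (v x)\<^sup>2 \<partial>M))"
    using u2 v2 by (simp add: ennreal_power nn_integral_eq_integral ennreal_mult)
  finally have "(\<integral>x. \<bar>u x\<bar> * \<bar>v x\<bar> \<partial>M)\<^sup>2 \<le> (\<integral>x. (u x)\<^sup>2 \<partial>M) * (\<integral>x. (v x)\<^sup>2 \<partial>M)"
    by simp
  then have "(\<integral>x. \<bar>u x\<bar> * \<bar>v x\<bar> \<partial>M) \<le> sqrt ((\<integral>x. (u x)\<^sup>2 \<partial>M) * (\<integral>x. (v x)\<^sup>2 \<partial>M))"
    by (rule real_le_rsqrt)
  moreover have "(\<integral>x. u x * v x \<partial>M) \<le> (\<integral>x. \<bar>u x\<bar> * \<bar>v x\<bar> \<partial>M)"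
    using uv integrable_abs[OF uv] by (intro integral_mono) (auto simp: abs_mult[symmetric])
  ultimately show "(\<integral>x. u x * v x \<partial>M) \<le> sqrt ((\<integral>x. (u x)\<^sup>2 \<partial>M) * (\<integral>x. (v x)\<^sup>2 \<partial>M))"
    by linarith
qed

lemma integrable_of_abs_diff_le:
  fixes P Q G :: "'a \<Rightarrow> real"
  assumes "P \<in> borel_measurable M" "integrable M Q" "integrable M G"
    and "\<And>x. \<bar>P x - Q x\<bar> \<le> G x"
  shows "integrable M P"
proof (rule Bochner_Integration.integrable_bound[of _ "\<lambda>x. \<bar>Q x\<bar> + G x"])
  have "\<bar>P x\<bar> \<le> \<bar>Q x\<bar> + G x" for x
    using assms(4)[of x] by linarith
  then show "AE x in M. norm (P x) \<le> norm (\<bar>Q x\<bar> + G x)"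
    by (auto intro: order_trans[OF _ abs_ge_self])
qed (use assms in auto)

lemma abs_integral_diff_le:
  fixes P Q a \<delta> R :: "'a \<Rightarrow> real"
  assumes meas: "P \<in> borel_measurable M" "a \<in> borel_measurable M" "\<delta> \<in> borel_measurable M"
    and Q: "integrable M Q" and R: "integrable M R" and beta: "beta > 0"
    and gap: "\<And>x. \<bar>P x - Q x\<bar> \<le> a x * \<delta> x + beta * (\<delta> x)\<^sup>2"
    and self_bound: "\<And>x. (a x)\<^sup>2 \<le> 4 * beta * Q x"
    and stab: "\<And>x. (\<delta> x)\<^sup>2 \<le> R x"
  shows "integrable M P"
    and "\<bar>(\<integral>x. P x \<partial>M) - (\<integral>x. Q x \<partial>M)\<bar>
           \<le> sqrt (4 * beta * (\<integral>x. Q x \<partial>M) * (\<integral>x. R x \<partial>M)) + beta * (\<integral>x. R x \<partial>M)"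
proof -
  have a2: "integrable M (\<lambda>x. (a x)\<^sup>2)"
    by (rule Bochner_Integration.integrable_bound[of _ "\<lambda>x. 4 * beta * Q x"])
       (use Q meas in \<open>auto intro: order_trans[OF self_bound abs_ge_self]\<close>)
  have \<delta>2: "integrable M (\<lambda>x. (\<delta> x)\<^sup>2)"
    by (rule Bochner_Integration.integrable_bound[OF R])
       (use meas in \<open>auto intro: order_trans[OF stab abs_ge_self]\<close>)
  note cs = integral_mult_le_sqrt[OF meas(2,3) a2 \<delta>2]
  show P: "integrable M P"
    using integrable_of_abs_diff_le[OF meas(1) Q _ gap] cs(1) \<delta>2 by simp
  have "\<bar>(\<integral>x. P x \<partial>M) - (\<integral>x. Q x \<partial>M)\<bar> = \<bar>\<integral>x. P x - Q x \<partial>M\<bar>"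
    using P Q by simp
  also have "\<dots> \<le> (\<integral>x. \<bar>P x - Q x\<bar> \<partial>M)"
    by (rule integral_abs_bound)
  also have "\<dots> \<le> (\<integral>x. a x * \<delta> x + beta * (\<delta> x)\<^sup>2 \<partial>M)"
    using P Q cs(1) \<delta>2 gap by (intro integral_mono) auto
  also have "\<dots> = (\<integral>x. a x * \<delta> x \<partial>M) + beta * (\<integral>x. (\<delta> x)\<^sup>2 \<partial>M)"
    using cs(1) \<delta>2 by simp
  also have "\<dots> \<le> sqrt ((\<integral>x. (a x)\<^sup>2 \<partial>M) * (\<integral>x. (\<delta> x)\<^sup>2 \<partial>M)) + beta * (\<integral>x. R x \<partial>M)"
    using cs(2) \<delta>2 R stab beta by (intro add_mono mult_left_mono integral_mono) auto
  also have "\<dots> \<le> sqrt (4 * beta * (\<integral>x. Q x \<partial>M) * (\<integral>x. R x \<partial>M)) + beta * (\<integral>x. R x \<partial>M)"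
  proof -
    have A: "(\<integral>x. (a x)\<^sup>2 \<partial>M) \<le> 4 * beta * (\<integral>x. Q x \<partial>M)"
      using a2 Q self_bound integral_mono[of M "\<lambda>x. (a x)\<^sup>2" "\<lambda>x. 4 * beta * Q x"] by simp
    have B: "(\<integral>x. (\<delta> x)\<^sup>2 \<partial>M) \<le> (\<integral>x. R x \<partial>M)"
      using \<delta>2 R stab by (intro integral_mono) auto
    have "(\<integral>x. (a x)\<^sup>2 \<partial>M) * (\<integral>x. (\<delta> x)\<^sup>2 \<partial>M) \<le> 4 * beta * (\<integral>x. Q x \<partial>M) * (\<integral>x. R x \<partial>M)"
      using A B order_trans[OF _ A] by (intro mult_mono) auto
    then show ?thesis by simp
  qed
  finally show "\<bar>(\<integral>x. P x \<partial>M) - (\<integral>x. Q x \<partial>M)\<bar>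
      \<le> sqrt (4 * beta * (\<integral>x. Q x \<partial>M) * (\<integral>x. R x \<partial>M)) + beta * (\<integral>x. R x \<partial>M)" .
qed

lemma borel_measurable_caratheodory:
  fixes h :: "'a::{metric_space,second_countable_topology} \<Rightarrow> 'z \<Rightarrow> 'b::{real_normed_vector,second_countable_topology}"
  assumes h_meas: "\<And>w. h w \<in> borel_measurable D"
    and h_cont: "\<And>z. continuous_on UNIV (\<lambda>w. h w z)"
    and W: "W \<in> borel_measurable M" and Z: "Z \<in> measurable M D"
  shows "(\<lambda>x. h (W x) (Z x)) \<in> borel_measurable M"
proof -
  obtain F where F: "\<And>k. simple_function M (F k)"
    and lim: "\<And>x. x \<in> space M \<Longrightarrow> (\<lambda>k. F k x) \<longlonglongrightarrow> W x"
    using borel_measurable_implies_sequence_metric[OF W] by blast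
  have "(\<lambda>x. h (F k x) (Z x)) \<in> borel_measurable M" for k
  proof (rule measurable_compose_countable'[where I = "F k ` space M"])
    show "(\<lambda>x. h v (Z x)) \<in> borel_measurable M" for v
      using measurable_compose[OF Z h_meas] .
    show "F k \<in> measurable M (count_space (F k ` space M))"
      using F[of k] unfolding simple_function_def by (subst measurable_count_space_eq2) auto
    show "countable (F k ` space M)"
      using F[of k] unfolding simple_function_def by (simp add: countable_finite)
  qed
  then show ?thesis
  proof (rule borel_measurable_LIMSEQ_metric)
    fix x assume "x \<in> space M"
    moreover have "isCont (\<lambda>w. h w (Z x)) (W x)"
      using h_cont[of "Z x"] by (simp add: continuous_on_eq_continuous_at)
    ultimately show "(\<lambda>k. h (F k x) (Z x)) \<longlonglongrightarrow> h (W x) (Z x)"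
      using lim isCont_tendsto_compose by blast
  qed
qed

lemma measurable_PiM_reindex:
  "t \<in> J \<rightarrow> I \<Longrightarrow> (\<lambda>x. \<lambda>k\<in>J. x (t k)) \<in> measurable (Pi\<^sub>M I (\<lambda>_. D)) (Pi\<^sub>M J (\<lambda>_. D))"
  by (intro measurable_restrict measurable_component_singleton) auto

lemma integrable_PiM_reindex_iff:
  fixes \<phi> :: "_ \<Rightarrow> real"
  assumes "prob_space D" "inj_on t J" "t \<in> J \<rightarrow> I" "\<phi> \<in> borel_measurable (Pi\<^sub>M J (\<lambda>_. D))"
  shows "integrable (Pi\<^sub>M I (\<lambda>_. D)) (\<lambda>x. \<phi> (\<lambda>k\<in>J. x (t k))) \<longleftrightarrow> integrable (Pi\<^sub>M J (\<lambda>_. D)) \<phi>"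
  using integrable_distr_eq[OF measurable_PiM_reindex[OF assms(3)] assms(4)]
    distr_PiM_reindex[of I "\<lambda>_. D" t J] assms by simp

lemma integral_PiM_reindex:
  fixes \<phi> :: "_ \<Rightarrow> real"
  assumes "prob_space D" "inj_on t J" "t \<in> J \<rightarrow> I" "\<phi> \<in> borel_measurable (Pi\<^sub>M J (\<lambda>_. D))"
  shows "(\<integral>x. \<phi> (\<lambda>k\<in>J. x (t k)) \<partial>Pi\<^sub>M I (\<lambda>_. D)) = (\<integral>y. \<phi> y \<partial>Pi\<^sub>M J (\<lambda>_. D))"
  using integral_distr[OF measurable_PiM_reindex[OF assms(3)] assms(4)]
    distr_PiM_reindex[of I "\<lambda>_. D" t J] assms by simp

lemma integrable_loss_component:
  fixes f :: "'a \<Rightarrow> 'z \<Rightarrow> real"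
  assumes nonneg: "\<And>w z. 0 \<le> f w z" and j: "j < n"
    and meas: "(\<lambda>S. f (A S) (S j)) \<in> borel_measurable M"
    and int: "integrable M (\<lambda>S. emp_risk f n S (A S))"
  shows "integrable M (\<lambda>S. f (A S) (S j))"
proof (rule Bochner_Integration.integrable_bound[OF integrable_mult_right[OF int, of "real n"] meas])
  have "f (A S) (S j) \<le> real n * emp_risk f n S (A S)" for S
    using j nonneg by (auto simp: emp_risk_def intro!: member_le_sum)
  then show "AE S in M. norm (f (A S) (S j)) \<le> norm (real n * emp_risk f n S (A S))"
    using nonneg by (auto intro: order_trans[OF _ abs_ge_self])
qed

section \<open>The replace-one coupling\<close>

(* A ghost sample x consists of n + 1 independent points: sample x is the training sample S,
   x n plays the independent copy z_i' and resample x is S with z_i replaced by z_i'. *)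
locale ghost_sample = prob_space D for D :: "'z measure" +
  fixes n i :: nat
  assumes i_less_n: "i < n"
begin

definition ghost_space :: "(nat \<Rightarrow> 'z) measure" where
  "ghost_space = Pi\<^sub>M {..<Suc n} (\<lambda>_. D)"

definition sample :: "(nat \<Rightarrow> 'z) \<Rightarrow> nat \<Rightarrow> 'z" where
  "sample x = restrict x {..<n}"

definition resample :: "(nat \<Rightarrow> 'z) \<Rightarrow> nat \<Rightarrow> 'z" where
  "resample x = (sample x)(i := x n)"

lemma sample_eq_reindex: "sample x = (\<lambda>k\<in>{..<n}. x k)"
  unfolding sample_def by simp

lemma resample_eq_reindex: "resample x = (\<lambda>k\<in>{..<n}. x (Transposition.transpose i n k))"
  using i_less_n unfolding resample_def sample_def by (auto simp: Transposition.transpose_def)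

lemma measurable_sample: "sample \<in> measurable ghost_space (sample_space D n)"
  unfolding ghost_space_def sample_space_def sample_eq_reindex
  using measurable_PiM_reindex[of "\<lambda>k. k"] by auto

lemma measurable_resample: "resample \<in> measurable ghost_space (sample_space D n)"
  unfolding ghost_space_def sample_space_def resample_eq_reindex
  using i_less_n by (intro measurable_PiM_reindex) (auto simp: Transposition.transpose_def)

lemma measurable_ghost_component: "j \<le> n \<Longrightarrow> (\<lambda>x. x j) \<in> measurable ghost_space D"
  unfolding ghost_space_def by (intro measurable_component_singleton) auto

lemma integrable_sample_iff:
  fixes \<phi> :: "_ \<Rightarrow> real"
  assumes "\<phi> \<in> borel_measurable (sample_space D n)"
  shows "integrable ghost_space (\<lambda>x. \<phi> (sample x)) \<longleftrightarrow> integrable (sample_space D n) \<phi>"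
  using integrable_PiM_reindex_iff[of D "\<lambda>k. k" "{..<n}" "{..<Suc n}" \<phi>] assms prob_space_axioms
  unfolding ghost_space_def sample_space_def sample_eq_reindex by auto

lemma integral_sample:
  fixes \<phi> :: "_ \<Rightarrow> real"
  assumes "\<phi> \<in> borel_measurable (sample_space D n)"
  shows "(\<integral>x. \<phi> (sample x) \<partial>ghost_space) = (\<integral>S. \<phi> S \<partial>sample_space D n)"
  using integral_PiM_reindex[of D "\<lambda>k. k" "{..<n}" "{..<Suc n}" \<phi>] assms prob_space_axioms
  unfolding ghost_space_def sample_space_def sample_eq_reindex by auto

(* Swapping the coordinates i and n preserves the law of the ghost sample and turns
   (sample x, x n) into (resample x, x i). *)
lemma
  fixes \<phi> :: "(nat \<Rightarrow> 'z) \<Rightarrow> 'z \<Rightarrow> real"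
  assumes meas: "(\<lambda>x. \<phi> (sample x) (x n)) \<in> borel_measurable ghost_space"
  shows integrable_resample_iff:
      "integrable ghost_space (\<lambda>x. \<phi> (resample x) (x i)) \<longleftrightarrow> integrable ghost_space (\<lambda>x. \<phi> (sample x) (x n))"
    and integral_resample:
      "(\<integral>x. \<phi> (resample x) (x i) \<partial>ghost_space) = (\<integral>x. \<phi> (sample x) (x n) \<partial>ghost_space)"
proof -
  let ?\<tau> = "Transposition.transpose i n"
  have "sample (\<lambda>k\<in>{..<Suc n}. x (?\<tau> k)) = resample x" for x
    using i_less_n unfolding sample_def resample_eq_reindex by (auto simp: Transposition.transpose_def)
  moreover have "(\<lambda>k\<in>{..<Suc n}. x (?\<tau> k)) n = x i" for x
    by simp
  moreover have "?\<tau> \<in> {..<Suc n} \<rightarrow> {..<Suc n}"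
    using i_less_n by (auto simp: Transposition.transpose_def)
  ultimately show "integrable ghost_space (\<lambda>x. \<phi> (resample x) (x i)) \<longleftrightarrow> integrable ghost_space (\<lambda>x. \<phi> (sample x) (x n))"
    and "(\<integral>x. \<phi> (resample x) (x i) \<partial>ghost_space) = (\<integral>x. \<phi> (sample x) (x n) \<partial>ghost_space)"
    using integrable_PiM_reindex_iff[of D ?\<tau> "{..<Suc n}" "{..<Suc n}" "\<lambda>x. \<phi> (sample x) (x n)"]
      integral_PiM_reindex[of D ?\<tau> "{..<Suc n}" "{..<Suc n}" "\<lambda>x. \<phi> (sample x) (x n)"]
      meas prob_space_axioms
    unfolding ghost_space_def by auto
qed

lemma integral_fresh_point:
  fixes \<phi> :: "(nat \<Rightarrow> 'z) \<Rightarrow> 'z \<Rightarrow> real"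
  assumes int: "integrable ghost_space (\<lambda>x. \<phi> (sample x) (x n))"
  shows "(\<integral>x. \<phi> (sample x) (x n) \<partial>ghost_space) = (\<integral>S. (\<integral>z. \<phi> S z \<partial>D) \<partial>sample_space D n)"
proof -
  interpret product_prob_space "\<lambda>_::nat. D"
    by (intro product_prob_spaceI prob_space_axioms)
  have "ghost_space = Pi\<^sub>M (insert n {..<n}) (\<lambda>_. D)"
    unfolding ghost_space_def lessThan_Suc ..
  then have "(\<integral>x. \<phi> (sample x) (x n) \<partial>ghost_space)
      = (\<integral>S. (\<integral>z. \<phi> (sample (S(n := z))) z \<partial>D) \<partial>Pi\<^sub>M {..<n} (\<lambda>_. D))"
    using int by (simp add: product_integral_insert)
  also have "\<dots> = (\<integral>S. (\<integral>z. \<phi> S z \<partial>D) \<partial>sample_space D n)"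
  proof (unfold sample_space_def, rule Bochner_Integration.integral_cong[OF refl])
    fix S assume "S \<in> space (Pi\<^sub>M {..<n} (\<lambda>_. D))"
    then have "sample (S(n := z)) = S" for z
      by (auto simp: sample_def space_PiM PiE_def extensional_def fun_eq_iff)
    then show "(\<integral>z. \<phi> (sample (S(n := z))) z \<partial>D) = (\<integral>z. \<phi> S z \<partial>D)"
      by simp
  qed
  finally show ?thesis .
qed

lemma integral_loss_component_eq:
  fixes A :: "(nat \<Rightarrow> 'z) \<Rightarrow> 'a" and f :: "'a \<Rightarrow> 'z \<Rightarrow> real"
  assumes perm: "\<And>p S S'. bij_betw p {..<n} {..<n} \<Longrightarrow> (\<And>j. j < n \<Longrightarrow> S' j = S (p j)) \<Longrightarrow> A S' = A S"
    and meas: "(\<lambda>S. f (A S) (S i)) \<in> borel_measurable (sample_space D n)"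
    and j: "j < n"
  shows "(\<integral>S. f (A S) (S j) \<partial>sample_space D n) = (\<integral>S. f (A S) (S i) \<partial>sample_space D n)"
proof -
  let ?\<tau> = "Transposition.transpose i j"
  let ?perm = "\<lambda>S. \<lambda>k\<in>{..<n}. S (?\<tau> k)"
  have \<tau>: "bij_betw ?\<tau> {..<n} {..<n}" "?\<tau> \<in> {..<n} \<rightarrow> {..<n}"
    using i_less_n j by (auto simp: Transposition.transpose_def)
  have pointwise: "f (A S) (S j) = f (A (?perm S)) (?perm S i)" for S
  proof -
    have "A (?perm S) = A S"
      by (rule perm[OF \<tau>(1)]) simp
    moreover have "?perm S i = S j"
      using i_less_n by simp
    ultimately show ?thesis by metis
  qed
  have "(\<integral>S. f (A S) (S j) \<partial>sample_space D n) = (\<integral>S. f (A (?perm S)) (?perm S i) \<partial>sample_space D n)"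
    by (simp only: pointwise)
  also have "\<dots> = (\<integral>S. f (A S) (S i) \<partial>sample_space D n)"
    using integral_PiM_reindex[OF prob_space_axioms inj_on_transpose \<tau>(2)] meas
    unfolding sample_space_def by blast
  finally show ?thesis .
qed

lemma integral_emp_risk_eq:
  fixes A :: "(nat \<Rightarrow> 'z) \<Rightarrow> 'a" and f :: "'a \<Rightarrow> 'z \<Rightarrow> real"
  assumes perm: "\<And>p S S'. bij_betw p {..<n} {..<n} \<Longrightarrow> (\<And>j. j < n \<Longrightarrow> S' j = S (p j)) \<Longrightarrow> A S' = A S"
    and meas: "\<And>j. j < n \<Longrightarrow> (\<lambda>S. f (A S) (S j)) \<in> borel_measurable (sample_space D n)"
    and nonneg: "\<And>w z. 0 \<le> f w z"
    and int: "integrable (sample_space D n) (\<lambda>S. emp_risk f n S (A S))"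
  shows "(\<integral>S. emp_risk f n S (A S) \<partial>sample_space D n) = (\<integral>S. f (A S) (S i) \<partial>sample_space D n)"
proof -
  have "integrable (sample_space D n) (\<lambda>S. f (A S) (S j))" if "j < n" for j
    using integrable_loss_component[OF nonneg that meas[OF that] int] .
  then have "(\<integral>S. emp_risk f n S (A S) \<partial>sample_space D n) = (\<Sum>j<n. \<integral>S. f (A S) (S j) \<partial>sample_space D n) / real n"
    unfolding emp_risk_def by (simp add: integral_sum)
  also have "\<dots> = (\<Sum>j<n. \<integral>S. f (A S) (S i) \<partial>sample_space D n) / real n"
    using integral_loss_component_eq[OF perm meas[OF i_less_n]]
    by (intro arg_cong[where f = "\<lambda>x. x / real n"] sum.cong) auto
  also have "\<dots> = (\<integral>S. f (A S) (S i) \<partial>sample_space D n)"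
    using i_less_n by simp
  finally show ?thesis .
qed

end

section \<open>Generalization gap of gradient descent\<close>

locale smooth_gd = ghost_sample D n i
  for D :: "'z measure" and n i :: nat +
  fixes f :: "'a::euclidean_space \<Rightarrow> 'z \<Rightarrow> real" and g :: "'a \<Rightarrow> 'z \<Rightarrow> 'a"
    and beta :: real and eta :: "nat \<Rightarrow> real" and W1 :: 'a and T :: nat
  assumes nonneg: "\<And>w z. 0 \<le> f w z"
    and grad: "\<And>w z. ((\<lambda>v. f v z) has_derivative (\<lambda>h. g w z \<bullet> h)) (at w)"
    and smooth: "\<And>w u z. norm (g w z - g u z) \<le> beta * norm (w - u)"
    and beta_pos: "0 < beta"
    and f_meas: "\<And>w. f w \<in> borel_measurable D"
    and g_meas: "\<And>w. g w \<in> borel_measurable D"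
    and eta_nonneg: "\<And>t. 1 \<le> t \<Longrightarrow> t \<le> T \<Longrightarrow> 0 \<le> eta t"
begin

abbreviation A :: "(nat \<Rightarrow> 'z) \<Rightarrow> 'a" where
  "A \<equiv> gd_output eta g W1 n T"

lemma measurable_loss_at:
  assumes "W \<in> borel_measurable M" "Z \<in> measurable M D"
  shows "(\<lambda>x. f (W x) (Z x)) \<in> borel_measurable M"
proof (rule borel_measurable_caratheodory[OF f_meas _ assms])
  show "continuous_on UNIV (\<lambda>w. f w z)" for z
    using grad has_derivative_continuous by (metis continuous_at_imp_continuous_on)
qed

lemma measurable_grad_at:
  assumes "W \<in> borel_measurable M" "Z \<in> measurable M D"
  shows "(\<lambda>x. g (W x) (Z x)) \<in> borel_measurable M"
proof (rule borel_measurable_caratheodory[OF g_meas _ assms])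
  fix z
  have "beta-lipschitz_on UNIV (\<lambda>w. g w z)"
    using smooth beta_pos by (intro lipschitz_onI) (auto simp: dist_norm)
  then show "continuous_on UNIV (\<lambda>w. g w z)"
    by (rule lipschitz_on_continuous_on)
qed

lemma measurable_gd_iter: "(\<lambda>S. gd_iter eta g W1 n S k) \<in> borel_measurable (sample_space D n)"
proof (induction k)
  case (Suc k)
  have "(\<lambda>S. g (gd_iter eta g W1 n S k) (S j)) \<in> borel_measurable (sample_space D n)" if "j < n" for j
    using that unfolding sample_space_def
    by (intro measurable_grad_at[OF Suc[unfolded sample_space_def]] measurable_component_singleton) auto
  then show ?case using Suc by simp
qed simp

definition in_sample_loss :: "(nat \<Rightarrow> 'z) \<Rightarrow> real" where
  "in_sample_loss x = f (A (sample x)) (x i)"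

definition out_of_sample_loss :: "(nat \<Rightarrow> 'z) \<Rightarrow> real" where
  "out_of_sample_loss x = f (A (resample x)) (x i)"

definition output_grad_norm :: "(nat \<Rightarrow> 'z) \<Rightarrow> real" where
  "output_grad_norm x = norm (g (A (sample x)) (x i))"

definition replace_one_dist :: "(nat \<Rightarrow> 'z) \<Rightarrow> real" where
  "replace_one_dist x = norm (A (resample x) - A (sample x))"

definition path_grad_sq :: "nat \<Rightarrow> (nat \<Rightarrow> 'z) \<Rightarrow> real" where
  "path_grad_sq t S = (norm (g (gd_iter eta g W1 n S (t - 1)) (S i)))\<^sup>2"

definition replace_one_bound :: "(nat \<Rightarrow> 'z) \<Rightarrow> real" where
  "replace_one_bound x = 2 * stability_weight beta eta T / (real n)\<^sup>2
     * (\<Sum>t=1..T. eta t * (path_grad_sq t (sample x) + path_grad_sq t (resample x)))"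

lemma sample_at_i: "sample x i = x i"
  using i_less_n by (simp add: sample_def)

lemma measurable_ghost_quantities:
  "out_of_sample_loss \<in> borel_measurable ghost_space"
  "output_grad_norm \<in> borel_measurable ghost_space"
  "replace_one_dist \<in> borel_measurable ghost_space"
proof -
  have A_sample: "(\<lambda>x. A (sample x)) \<in> borel_measurable ghost_space"
    and A_resample: "(\<lambda>x. A (resample x)) \<in> borel_measurable ghost_space"
    unfolding gd_output_def
    by (intro measurable_compose[OF measurable_sample measurable_gd_iter]
        measurable_compose[OF measurable_resample measurable_gd_iter])+
  have x_i: "(\<lambda>x. x i) \<in> measurable ghost_space D"
    using i_less_n by (intro measurable_ghost_component) simp
  show "out_of_sample_loss \<in> borel_measurable ghost_space"
    unfolding out_of_sample_loss_def by (rule measurable_loss_at[OF A_resample x_i])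
  show "output_grad_norm \<in> borel_measurable ghost_space"
    unfolding output_grad_norm_def
    by (rule measurable_compose[OF measurable_grad_at[OF A_sample x_i] borel_measurable_norm])
  show "replace_one_dist \<in> borel_measurable ghost_space"
    unfolding replace_one_dist_def using A_sample A_resample by measurable
qed

lemma out_of_sample_gap:
  "\<bar>out_of_sample_loss x - in_sample_loss x\<bar>
     \<le> output_grad_norm x * replace_one_dist x + beta * (replace_one_dist x)\<^sup>2"
  unfolding out_of_sample_loss_def in_sample_loss_def output_grad_norm_def replace_one_dist_def
  using abs_diff_le_norm_grad[OF grad smooth] beta_pos sample_at_i by simp

lemma output_grad_norm_sq_le: "(output_grad_norm x)\<^sup>2 \<le> 4 * beta * in_sample_loss x"
  unfolding output_grad_norm_def in_sample_loss_def
  using norm_grad_sq_le[OF grad smooth beta_pos nonneg] .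

lemma replace_one_dist_sq_le: "(replace_one_dist x)\<^sup>2 \<le> replace_one_bound x"
proof -
  have "resample x j = sample x j" if "j < n" "j \<noteq> i" for j
    using that by (simp add: resample_def)
  then have "(norm (A (sample x) - A (resample x)))\<^sup>2 \<le> replace_one_bound x"
    unfolding gd_output_def replace_one_bound_def path_grad_sq_def
    using norm_gd_iter_replace_one_sq_le[where g = g and eta = eta and S = "sample x"
        and S' = "resample x" and K = T,
        OF smooth less_imp_le[OF beta_pos] i_less_n] eta_nonneg
    by simp
  then show ?thesis
    unfolding replace_one_dist_def by (simp add: norm_minus_commute)
qed

lemma in_sample_loss_integral:
  assumes int_emp: "integrable (sample_space D n) (\<lambda>S. emp_risk f n S (A S))"
  shows "integrable ghost_space in_sample_loss"
    and "(\<integral>x. in_sample_loss x \<partial>ghost_space) = (\<integral>S. emp_risk f n S (A S) \<partial>sample_space D n)"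
proof -
  have meas: "(\<lambda>S. f (A S) (S j)) \<in> borel_measurable (sample_space D n)" if "j < n" for j
    using that unfolding gd_output_def
    by (intro measurable_loss_at[OF measurable_gd_iter]) (simp add: sample_space_def)
  have perm: "A S' = A S"
    if "bij_betw p {..<n} {..<n}" "\<And>j. j < n \<Longrightarrow> S' j = S (p j)" for p S S'
    unfolding gd_output_def by (rule gd_iter_permute[OF that(1)]) (rule that(2))
  have eq: "in_sample_loss = (\<lambda>x. f (A (sample x)) (sample x i))"
    by (simp add: in_sample_loss_def sample_at_i fun_eq_iff)
  show "integrable ghost_space in_sample_loss"
    unfolding eq integrable_sample_iff[OF meas[OF i_less_n]]
    by (rule integrable_loss_component[OF nonneg i_less_n meas[OF i_less_n] int_emp])
  show "(\<integral>x. in_sample_loss x \<partial>ghost_space) = (\<integral>S. emp_risk f n S (A S) \<partial>sample_space D n)"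
    unfolding eq integral_sample[OF meas[OF i_less_n]]
    using integral_emp_risk_eq[OF perm meas nonneg int_emp] by simp
qed

lemma out_of_sample_loss_integral:
  assumes int: "integrable ghost_space out_of_sample_loss"
  shows "(\<integral>x. out_of_sample_loss x \<partial>ghost_space) = (\<integral>S. pop_risk D f (A S) \<partial>sample_space D n)"
proof -
  have meas: "(\<lambda>x. f (A (sample x)) (x n)) \<in> borel_measurable ghost_space"
    unfolding gd_output_def
    by (intro measurable_loss_at measurable_compose[OF measurable_sample measurable_gd_iter]
        measurable_ghost_component) simp
  note swap = integrable_resample_iff[of "\<lambda>S z. f (A S) z", OF meas]
    integral_resample[of "\<lambda>S z. f (A S) z", OF meas]
  have "(\<integral>x. out_of_sample_loss x \<partial>ghost_space) = (\<integral>x. f (A (sample x)) (x n) \<partial>ghost_space)"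
    using swap(2) unfolding out_of_sample_loss_def .
  also have "\<dots> = (\<integral>S. pop_risk D f (A S) \<partial>sample_space D n)"
    using integral_fresh_point[of "\<lambda>S z. f (A S) z"] int swap(1)
    unfolding out_of_sample_loss_def pop_risk_def by simp
  finally show ?thesis .
qed

lemma replace_one_bound_integral:
  assumes int_grad: "\<And>t. 1 \<le> t \<Longrightarrow> t \<le> T \<Longrightarrow> integrable (sample_space D n) (path_grad_sq t)"
  shows "integrable ghost_space replace_one_bound"
    and "(\<integral>x. replace_one_bound x \<partial>ghost_space)
           = 4 * stability_weight beta eta T * eps_path D g W1 eta n T i / (real n)\<^sup>2"
proof -
  have meas: "path_grad_sq t \<in> borel_measurable (sample_space D n)" for t
  proof -
    have "(\<lambda>S. g (gd_iter eta g W1 n S (t - 1)) (S i)) \<in> borel_measurable (sample_space D n)"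
      using i_less_n unfolding sample_space_def
      by (intro measurable_grad_at[OF measurable_gd_iter[unfolded sample_space_def]]) simp
    then show ?thesis
      unfolding path_grad_sq_def by measurable
  qed
  have meas_ghost: "(\<lambda>x. path_grad_sq t (sample x)) \<in> borel_measurable ghost_space" for t
    by (rule measurable_compose[OF measurable_sample meas])
  note sample = integrable_sample_iff[OF meas] integral_sample[OF meas]
  note resample = integrable_resample_iff[of "\<lambda>S z. path_grad_sq _ S", OF meas_ghost]
    integral_resample[of "\<lambda>S z. path_grad_sq _ S", OF meas_ghost]
  show "integrable ghost_space replace_one_bound"
    unfolding replace_one_bound_def
    by (intro integrable_mult_right integrable_sum integrable_add) (use sample resample int_grad in auto)
  have "(\<integral>x. replace_one_bound x \<partial>ghost_space) = 2 * stability_weight beta eta T / (real n)\<^sup>2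
      * (\<Sum>t=1..T. eta t * (2 * (\<integral>S. path_grad_sq t S \<partial>sample_space D n)))"
    unfolding replace_one_bound_def using sample resample int_grad by (simp add: integral_sum)
  also have "\<dots> = 4 * stability_weight beta eta T / (real n)\<^sup>2
      * (\<Sum>t=1..T. eta t * (\<integral>S. path_grad_sq t S \<partial>sample_space D n))"
    by (simp add: sum_distrib_left mult_ac)
  also have "\<dots> = 4 * stability_weight beta eta T * eps_path D g W1 eta n T i / (real n)\<^sup>2"
    unfolding eps_path_def path_grad_sq_def by simp
  finally show "(\<integral>x. replace_one_bound x \<partial>ghost_space)
      = 4 * stability_weight beta eta T * eps_path D g W1 eta n T i / (real n)\<^sup>2" .
qed

lemma abs_eps_gen_le:
  assumes int_pop: "integrable (sample_space D n) (\<lambda>S. pop_risk D f (A S))"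
    and int_emp: "integrable (sample_space D n) (\<lambda>S. emp_risk f n S (A S))"
    and int_grad: "\<And>t. 1 \<le> t \<Longrightarrow> t \<le> T \<Longrightarrow> integrable (sample_space D n) (path_grad_sq t)"
  defines "V \<equiv> beta * stability_weight beta eta T"
    and "E \<equiv> \<integral>S. emp_risk f n S (A S) \<partial>sample_space D n"
    and "epath \<equiv> eps_path D g W1 eta n T i"
  shows "\<bar>eps_gen D f g W1 eta n T\<bar> \<le> 4 / real n * sqrt (V * E * epath) + 4 * V * epath / (real n)\<^sup>2"
proof -
  note Q = in_sample_loss_integral[OF int_emp]
  have R: "integrable ghost_space replace_one_bound"
    using int_grad by (rule replace_one_bound_integral(1))
  have R_eq: "(\<integral>x. replace_one_bound x \<partial>ghost_space)
      = 4 * stability_weight beta eta T * epath / (real n)\<^sup>2"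
    unfolding epath_def using int_grad by (rule replace_one_bound_integral(2))
  note gap = abs_integral_diff_le[OF measurable_ghost_quantities Q(1) R beta_pos
      out_of_sample_gap output_grad_norm_sq_le replace_one_dist_sq_le]
  have gen_eq: "eps_gen D f g W1 eta n T
      = (\<integral>x. out_of_sample_loss x \<partial>ghost_space) - (\<integral>x. in_sample_loss x \<partial>ghost_space)"
    using int_pop int_emp out_of_sample_loss_integral[OF gap(1)] Q(2)
    unfolding eps_gen_def by simp
  have "4 * beta * E * (4 * stability_weight beta eta T * epath / (real n)\<^sup>2)
      = (4 / real n)\<^sup>2 * (V * E * epath)"
    by (simp add: V_def power_divide field_simps)
  then have sqrt_eq: "sqrt (4 * beta * E * (4 * stability_weight beta eta T * epath / (real n)\<^sup>2))
      = 4 / real n * sqrt (V * E * epath)"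
    by (simp add: real_sqrt_mult)
  have lin_eq: "beta * (4 * stability_weight beta eta T * epath / (real n)\<^sup>2) = 4 * V * epath / (real n)\<^sup>2"
    by (simp add: V_def)
  show ?thesis
    using gap(2) unfolding gen_eq Q(2) R_eq E_def[symmetric] sqrt_eq lin_eq .
qed

end

lemma gap_bound_mono_weight:
  fixes V E p X c :: real
  assumes "0 \<le> E" "0 \<le> p" "0 \<le> X" "0 \<le> c" "V \<le> X\<^sup>2 * c" "n > 0"
  shows "4 / real n * sqrt (V * E * p) + 4 * V * p / (real n)\<^sup>2
    \<le> (4 * sqrt 2 / real n) * sqrt (E * p) * X * sqrt c + 8 * (p / (real n)\<^sup>2) * X\<^sup>2 * c"
proof -
  have "sqrt (V * E * p) \<le> sqrt (X\<^sup>2 * c * (E * p))"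
    using mult_right_mono[OF assms(5), of "E * p"] assms by (simp add: mult.assoc)
  also have "\<dots> = 1 * (sqrt (E * p) * X * sqrt c)"
    using assms by (simp add: real_sqrt_mult mult_ac)
  also have "\<dots> \<le> sqrt 2 * (sqrt (E * p) * X * sqrt c)"
    using assms by (intro mult_right_mono) auto
  finally have "4 / real n * sqrt (V * E * p) \<le> (4 * sqrt 2 / real n) * sqrt (E * p) * X * sqrt c"
    using assms by (simp add: field_simps)
  moreover have "4 * V * p / (real n)\<^sup>2 \<le> 8 * (p / (real n)\<^sup>2) * X\<^sup>2 * c"
  proof -
    have "4 * V * p / (real n)\<^sup>2 \<le> 4 * (p / (real n)\<^sup>2 * X\<^sup>2 * c)"
      using mult_right_mono[OF assms(5) assms(2)] by (simp add: field_simps divide_right_mono)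
    also have "\<dots> \<le> 8 * (p / (real n)\<^sup>2 * X\<^sup>2 * c)"
      using assms by (intro mult_right_mono mult_nonneg_nonneg divide_nonneg_nonneg) auto
    finally show ?thesis by (simp add: mult.assoc)
  qed
  ultimately show ?thesis by linarith
qed

lemma gap_bound_cbar_simplify:
  fixes E p X c :: real
  assumes "0 \<le> E" "0 \<le> p" "0 \<le> X" "0 \<le> c" "c \<le> 3 / 2" "n > 0"
  shows "(4 * sqrt 2 / real n) * sqrt (E * p) * X * sqrt c + 8 * (p / (real n)\<^sup>2) * X\<^sup>2 * c
    \<le> (4 * sqrt 3 * X / real n) * sqrt (E * p) + 12 * (X\<^sup>2 / (real n)\<^sup>2) * p"
proof -
  have "sqrt 2 * sqrt c \<le> sqrt 3"
    using assms by (simp add: real_sqrt_mult[symmetric])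
  then have "(4 * X / real n * sqrt (E * p)) * (sqrt 2 * sqrt c) \<le> (4 * X / real n * sqrt (E * p)) * sqrt 3"
    using assms by (intro mult_left_mono) auto
  moreover have "(p / (real n)\<^sup>2 * X\<^sup>2) * (8 * c) \<le> (p / (real n)\<^sup>2 * X\<^sup>2) * 12"
    using assms by (intro mult_left_mono) (auto simp: zero_le_mult_iff)
  ultimately show ?thesis by (simp add: mult_ac)
qed

lemma gap_bound_cbar_form:
  fixes gap E p V eps c :: real and n T :: nat
  assumes gap: "\<bar>gap\<bar> \<le> 4 / real n * sqrt (V * E * p) + 4 * V * p / (real n)\<^sup>2"
    and V: "V \<le> real T powr (2 * eps) * c"
    and E: "0 \<le> E" and p: "0 \<le> p" and eps: "0 \<le> eps" and c: "0 \<le> c" "c \<le> 3 / 2"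
    and T: "1 \<le> T" and n: "0 < n"
  shows "\<bar>gap\<bar> \<le> (4 * sqrt 2 / real n) * sqrt (E * p) * (exp 1 * real T) powr eps * sqrt c
                  + 8 * (p / (real n)\<^sup>2) * (exp 1 * real T) powr (2 * eps) * c
       \<and> (4 * sqrt 2 / real n) * sqrt (E * p) * (exp 1 * real T) powr eps * sqrt c
                  + 8 * (p / (real n)\<^sup>2) * (exp 1 * real T) powr (2 * eps) * c
         \<le> (4 * sqrt 3 * (exp 1 * real T) powr eps / real n) * sqrt (E * p)
                  + 12 * ((exp 1 * real T) powr (2 * eps) / (real n)\<^sup>2) * p"
proof -
  define X where "X = (exp 1 * real T) powr eps"
  have X0: "0 \<le> X"
    unfolding X_def by simp
  have X2: "(exp 1 * real T) powr (2 * eps) = X\<^sup>2"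
    unfolding X_def power2_eq_square powr_add[symmetric]
    by (rule arg_cong[where f = "\<lambda>a. (exp 1 * real T) powr a"]) simp
  have "real T powr (2 * eps) \<le> (exp 1 * real T) powr (2 * eps)"
    using T eps by (intro powr_mono2) auto
  then have weight: "V \<le> X\<^sup>2 * c"
    using V c unfolding X2 by (meson mult_right_mono order_trans)
  show ?thesis
    unfolding X2 X_def[symmetric]
    using order_trans[OF gap gap_bound_mono_weight[OF E p X0 c(1) weight n]]
      gap_bound_cbar_simplify[OF E p X0 c n]
    by simp
qed

theorem theorem8:
  fixes D :: "'z measure"
    and f :: "'a::euclidean_space \<Rightarrow> 'z \<Rightarrow> real"
    and g :: "'a \<Rightarrow> 'z \<Rightarrow> 'a"
    and W1 :: 'a
    and eta :: "nat \<Rightarrow> real"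
    and wstar :: "(nat \<Rightarrow> 'z) \<Rightarrow> 'a"
    and beta C :: real
    and n T i :: nat
  assumes D: "prob_space D"
    and n: "n \<ge> 1" and i: "i < n" and T: "T \<ge> 1"
    and nonneg: "\<And>w z. f w z \<ge> 0"
    and grad: "\<And>w z. ((\<lambda>v. f v z) has_derivative (\<lambda>h. g w z \<bullet> h)) (at w)"
    and smooth: "\<And>w u z. norm (g w z - g u z) \<le> beta * norm (w - u)"
    and beta_pos: "beta > 0" and C_pos: "C > 0" and eps_lt: "beta * C < 1"
    and eta: "\<And>t. 1 \<le> t \<Longrightarrow> t \<le> T + 1 \<Longrightarrow>
                 0 < eta t \<and> eta t \<le> C / real t \<and> C / real t \<le> 1 / beta"
    and f_meas: "\<And>w. f w \<in> borel_measurable D"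
    and g_meas: "\<And>w. g w \<in> borel_measurable D"
    and wstar_min: "\<And>S w. S \<in> space (sample_space D n) \<Longrightarrow>
                      emp_risk f n S (wstar S) \<le> emp_risk f n S w"
    and int_pop: "integrable (sample_space D n) (\<lambda>S. pop_risk D f (gd_output eta g W1 n T S))"
    and int_emp: "integrable (sample_space D n) (\<lambda>S. emp_risk f n S (gd_output eta g W1 n T S))"
    and int_star: "integrable (sample_space D n) (\<lambda>S. emp_risk f n S (wstar S))"
    and int_grad: "\<And>t. 1 \<le> t \<Longrightarrow> t \<le> T \<Longrightarrow>
         integrable (sample_space D n) (\<lambda>S. (norm (g (gd_iter eta g W1 n S (t - 1)) (S i)))\<^sup>2)"
  shows "let eps = beta * C;
             gen = eps_gen D f g W1 eta n T;
             opt = eps_opt D f g W1 eta n T wstar;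
             c = eps_c D f n wstar;
             path = eps_path D g W1 eta n T i;
             B = (4 * sqrt 2 / real n) * sqrt ((opt + c) * path) * (exp 1 * real T) powr eps
                   * sqrt (cbar eps T)
                 + 8 * (path / (real n)\<^sup>2) * (exp 1 * real T) powr (2 * eps) * cbar eps T
         in \<bar>gen\<bar> \<le> B \<and>
            B \<le> (4 * sqrt 3 * (exp 1 * real T) powr eps / real n) * sqrt ((opt + c) * path)
                 + 12 * ((exp 1 * real T) powr (2 * eps) / (real n)\<^sup>2) * path"
proof -
  have eta_le: "0 \<le> eta t \<and> eta t \<le> C / real t" if "1 \<le> t" "t \<le> T" for t
    using eta[of t] that by simp
  interpret smooth_gd D n i f g beta eta W1 T
    by (intro smooth_gd.intro ghost_sample.intro ghost_sample_axioms.intro smooth_gd_axioms.intro)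
      (simp_all add: D i nonneg grad smooth beta_pos f_meas g_meas eta_le)
  define E where "E = (\<integral>S. emp_risk f n S (A S) \<partial>sample_space D n)"
  have opt_c: "eps_opt D f g W1 eta n T wstar + eps_c D f n wstar = E"
    using int_emp int_star unfolding eps_opt_def eps_c_def E_def by simp
  have gen: "\<bar>eps_gen D f g W1 eta n T\<bar>
      \<le> 4 / real n * sqrt (beta * stability_weight beta eta T * E * eps_path D g W1 eta n T i)
        + 4 * (beta * stability_weight beta eta T) * eps_path D g W1 eta n T i / (real n)\<^sup>2"
    unfolding E_def
    by (rule abs_eps_gen_le[OF int_pop int_emp]) (use int_grad in \<open>simp add: path_grad_sq_def[abs_def]\<close>)
  have weight: "beta * stability_weight beta eta T \<le> real T powr (2 * (beta * C)) * cbar (beta * C) T"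
    using beta_pos C_pos T eta_le by (rule stability_weight_le)
  have E0: "0 \<le> E"
    unfolding E_def emp_risk_def
    by (intro Bochner_Integration.integral_nonneg divide_nonneg_nonneg sum_nonneg nonneg) simp
  have path0: "0 \<le> eps_path D g W1 eta n T i"
    unfolding eps_path_def using eta_le
    by (intro sum_nonneg mult_nonneg_nonneg Bochner_Integration.integral_nonneg) auto
  show ?thesis
    unfolding Let_def opt_c
    using gap_bound_cbar_form[OF gen weight E0 path0] beta_pos C_pos T n
      cbar_nonneg[of "beta * C" T] cbar_le[OF eps_lt]
    by simp
qed

end
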